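(* Let $(TQ\times\mathbb R^m,\vec\lambda^L,E_L)$ be the $m$-contact Lagrangian system of a regular Lagrangian $L:TQ\times\mathbb R^m\to\mathbb R$, and let $$X=F_i\frac{\partial}{\partial q^i}+G_j\frac{\partial}{\partial \dot q^j}+H_k\frac{\partial}{\partial z^k},\qquad F_i,G_j,H_k\in C^\infty(TQ\times\mathbb R^m),$$ be a vector field on $TQ\times\mathbb R^m$. If $$-X(L)-[X_{E_L},X]^v(L)+\sum_{k=1}^m\frac{\partial L}{\partial z^k}H_k=0,$$ then the function $X^v(L)$ is a dissipated quantity of the system, i.e. $X_{E_L}(X^v(L))=-X^v(L)\sum_{k=1}^mR_k(E_L)$.
   Context: $Q$ is an $n$-dimensional manifold; $TQ\times\mathbb R^m$ has local coordinates $(q^i,\dot q^i,z^1,\dots,z^m)$. $L$ is regular if the matrix $W_{ij}=\partial^2L/\partial\dot q^i\partial\dot q^j$ is invertible; $(W^{ij})$ denotes its inverse. Define the $1$-forms $\lambda^L_k=dz^k-\frac{\partial L}{\partial\dot q^j}dq^j$, $k=1,\dots,m$ (so $d\lambda^L_k=d\lambda^L_1$ for all $k$), the vector fields $R_k=\frac{\partial}{\partial z^k}-W^{ij}\frac{\partial^2L}{\partial\dot q^i\partial z^k}\frac{\partial}{\partial\dot q^j}$ (which satisfy $\lambda^L_i(R_k)=\delta^i_k$, $i_{R_k}d\lambda^L_1=0$), and the energy $E_L=\dot q^i\frac{\partial L}{\partial\dot q^i}-L$. The forms $\lambda^L_k$ define a uniform $m$-contact structure on $TQ\times\mathbb R^m$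 with Reeb vector fields $R_k$. $X_{E_L}$ is the unique vector field with $\lambda^L_k(X_{E_L})=-E_L$ for all $k$ and $i_{X_{E_L}}d\lambda^L_1=dE_L-\sum_{k=1}^mR_k(E_L)\lambda^L_k$. The vertical endomorphism is $S=\frac{\partial}{\partial\dot q^i}\otimes dq^i$, and for a vector field $Z=F_i\partial_{q^i}+G_j\partial_{\dot q^j}+H_k\partial_{z^k}$ one writes $Z^v:=S(Z)=F_i\frac{\partial}{\partial\dot q^i}$. A function $g$ is a dissipated quantity if $X_{E_L}(g)=-g\sum_{k=1}^mR_k(E_L)$. *)

theory Defs
  imports "HOL-Analysis.Analysis"
begin

text \<open>Local coordinates (q, qdot, z) on TQ x R^m, with n = CARD('n), m = CARD('m).\<close>
type_synonym ('n, 'm) pt = "(real^'n) \<times> (real^'n) \<times> (real^'m)"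

text \<open>C-infinity on an open set D: differentiable, and all first partial
  derivatives again C-infinity (greatest fixed point).\<close>
coinductive smooth_on :: "'a::euclidean_space set \<Rightarrow> ('a \<Rightarrow> real) \<Rightarrow> bool" where
  "(\<forall>x\<in>D. f differentiable (at x)) \<Longrightarrow>
   (\<forall>b\<in>Basis. smooth_on D (\<lambda>x. frechet_derivative f (at x) b)) \<Longrightarrow> smooth_on D f"

definition smooth_vf :: "'a::euclidean_space set \<Rightarrow> ('a \<Rightarrow> 'a) \<Rightarrow> bool" where
  "smooth_vf D X \<longleftrightarrow> (\<forall>b\<in>Basis. smooth_on D (\<lambda>p. X p \<bullet> b))"

definition qc :: "('n,'m) pt \<Rightarrow> real^'n" where "qc p = fst p"
definition vc :: "('n,'m) pt \<Rightarrow> real^'n" where "vc p = fst (snd p)"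
definition zc :: "('n,'m) pt \<Rightarrow> real^'m" where "zc p = snd (snd p)"

definition vf_apply :: "('a::real_normed_vector \<Rightarrow> 'a) \<Rightarrow> ('a \<Rightarrow> real) \<Rightarrow> 'a \<Rightarrow> real" where
  "vf_apply X f p = frechet_derivative f (at p) (X p)"

definition pq :: "(('n::finite,'m::finite) pt \<Rightarrow> real) \<Rightarrow> 'n \<Rightarrow> ('n,'m) pt \<Rightarrow> real" where
  "pq f i p = frechet_derivative f (at p) (axis i 1, 0, 0)"
definition pv :: "(('n::finite,'m::finite) pt \<Rightarrow> real) \<Rightarrow> 'n \<Rightarrow> ('n,'m) pt \<Rightarrow> real" where
  "pv f i p = frechet_derivative f (at p) (0, axis i 1, 0)"
definition pz :: "(('n::finite,'m::finite) pt \<Rightarrow> real) \<Rightarrow> 'm \<Rightarrow> ('n,'m) pt \<Rightarrow> real" where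
  "pz f k p = frechet_derivative f (at p) (0, 0, axis k 1)"

definition lie_bracket :: "('a::real_normed_vector \<Rightarrow> 'a) \<Rightarrow> ('a \<Rightarrow> 'a) \<Rightarrow> 'a \<Rightarrow> 'a" where
  "lie_bracket A B p = frechet_derivative B (at p) (A p) - frechet_derivative A (at p) (B p)"

text \<open>Vertical endomorphism S = d/dqdot^i (x) dq^i on tangent vectors.\<close>
definition vert :: "('n::finite,'m::finite) pt \<Rightarrow> ('n,'m) pt" where
  "vert w = (0, qc w, 0)"

definition Wmat :: "(('n::finite,'m::finite) pt \<Rightarrow> real) \<Rightarrow> ('n,'m) pt \<Rightarrow> real^'n^'n" where
  "Wmat L p = (\<chi> i j. pv (pv L j) i p)"

definition regular :: "('n::finite,'m::finite) pt set \<Rightarrow> (('n,'m) pt \<Rightarrow> real) \<Rightarrow> bool" where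
  "regular D L \<longleftrightarrow> (\<forall>p\<in>D. invertible (Wmat L p))"

definition energy :: "(('n::finite,'m::finite) pt \<Rightarrow> real) \<Rightarrow> ('n,'m) pt \<Rightarrow> real" where
  "energy L p = (\<Sum>i\<in>UNIV. vc p $ i * pv L i p) - L p"

definition lam :: "(('n::finite,'m::finite) pt \<Rightarrow> real) \<Rightarrow> 'm \<Rightarrow> ('n,'m) pt \<Rightarrow> ('n,'m) pt \<Rightarrow> real" where
  "lam L k p w = zc w $ k - (\<Sum>j\<in>UNIV. pv L j p * qc w $ j)"

text \<open>Exterior derivative of a 1-form on a vector space:
  (d alpha)_p(u,w) = u(alpha(w)) - w(alpha(u)) (u, w constant).\<close>
definition d1form :: "('a::real_normed_vector \<Rightarrow> 'a \<Rightarrow> real) \<Rightarrow> 'a \<Rightarrow> 'a \<Rightarrow> 'a \<Rightarrow> real" where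
  "d1form \<alpha> p u w = frechet_derivative (\<lambda>x. \<alpha> x w) (at p) u - frechet_derivative (\<lambda>x. \<alpha> x u) (at p) w"

definition reeb :: "(('n::finite,'m::finite) pt \<Rightarrow> real) \<Rightarrow> 'm \<Rightarrow> ('n,'m) pt \<Rightarrow> ('n,'m) pt" where
  "reeb L k p = (0,
     (\<chi> j. - (\<Sum>i\<in>UNIV. matrix_inv (Wmat L p) $ i $ j * pv (pz L k) i p)),
     axis k 1)"

definition is_XEL :: "('n::finite,'m::finite) pt set \<Rightarrow> (('n,'m) pt \<Rightarrow> real) \<Rightarrow> (('n,'m) pt \<Rightarrow> ('n,'m) pt) \<Rightarrow> bool" where
  "is_XEL D L XE \<longleftrightarrow>
     (\<forall>p\<in>D. \<forall>k. lam L k p (XE p) = - energy L p) \<and>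
     (\<forall>p\<in>D. \<forall>k. \<forall>w. d1form (lam L k) p (XE p) w =
         frechet_derivative (energy L) (at p) w
         - (\<Sum>k'\<in>UNIV. vf_apply (reeb L k') (energy L) p * lam L k' p w))"

definition dissipated :: "('n::finite,'m::finite) pt set \<Rightarrow> (('n,'m) pt \<Rightarrow> real) \<Rightarrow> (('n,'m) pt \<Rightarrow> ('n,'m) pt) \<Rightarrow> (('n,'m) pt \<Rightarrow> real) \<Rightarrow> bool" where
  "dissipated D L XE g \<longleftrightarrow>
     (\<forall>p\<in>D. vf_apply XE g p = - g p * (\<Sum>k\<in>UNIV. vf_apply (reeb L k) (energy L) p))"

end

theory Submission
  imports Defs
begin

text \<open>Tested against the
  vertical directions \<open>\<partial>/\<partial>qdot\<^sup>i\<close> it reads \<open>W (dq(X\<^sub>E\<^sub>L) - qdot) = 0\<close>, so by regularity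
  \<open>X\<^sub>E\<^sub>L\<close> is a second-order equation; tested against \<open>\<partial>/\<partial>q\<^sup>i\<close> it then gives the Herglotz
  equations \<open>X\<^sub>E\<^sub>L(\<partial>L/\<partial>qdot\<^sup>i) = \<partial>L/\<partial>q\<^sup>i - \<rho> \<partial>L/\<partial>qdot\<^sup>i\<close> with \<open>\<rho> = \<Sum>\<^sub>k R\<^sub>k(E\<^sub>L)\<close>.
  Differentiating \<open>X\<^sup>v(L) = F\<^sub>i \<partial>L/\<partial>qdot\<^sup>i\<close> along \<open>X\<^sub>E\<^sub>L\<close> and inserting the Herglotz equations
  leaves \<open>-\<rho> X\<^sup>v(L)\<close> plus \<open>F\<^sub>i \<partial>L/\<partial>q\<^sup>i + X\<^sub>E\<^sub>L(F\<^sub>i) \<partial>L/\<partial>qdot\<^sup>i\<close>. Since \<open>X\<^sub>E\<^sub>L\<close> is second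
  order, the vertical part of \<open>[X\<^sub>E\<^sub>L, X]\<close> is \<open>(X\<^sub>E\<^sub>L(F\<^sub>i) - G\<^sub>i) \<partial>/\<partial>qdot\<^sup>i\<close>, so the hypothesis
  says precisely that this remainder vanishes.\<close>

lemma smooth_on_differentiable: "smooth_on D f \<Longrightarrow> x \<in> D \<Longrightarrow> f differentiable (at x)"
  by (erule smooth_on.cases) auto

lemma smooth_on_frechet_derivative:
  "smooth_on D f \<Longrightarrow> b \<in> Basis \<Longrightarrow> smooth_on D (\<lambda>x. frechet_derivative f (at x) b)"
  by (erule smooth_on.cases) auto

lemma smooth_on_pv:
  fixes L :: "('n::finite,'m::finite) pt \<Rightarrow> real"
  assumes "smooth_on D L"
  shows "smooth_on D (pv L j)"
proof -
  have "((0, axis j 1, 0) :: ('n,'m) pt) \<in> Basis"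
    by (simp add: Basis_prod_def)
  with assms show ?thesis
    using smooth_on_frechet_derivative unfolding pv_def[abs_def] by blast
qed

lemma smooth_vf_differentiable:
  assumes "smooth_vf D X" "p \<in> D"
  shows "X differentiable (at p)"
proof -
  have "(\<lambda>x. \<Sum>b\<in>Basis. (X x \<bullet> b) *\<^sub>R b) differentiable (at p)"
    using assms smooth_on_differentiable unfolding smooth_vf_def
    by (intro differentiable_sum ballI differentiable_scaleR differentiable_const) auto
  then show ?thesis
    by (simp add: euclidean_representation)
qed

lemma frechet_derivative_bounded_linear_comp:
  assumes "f differentiable (at p)" "bounded_linear g"
  shows "frechet_derivative (\<lambda>x. g (f x)) (at p) h = g (frechet_derivative f (at p) h)"
    and "(\<lambda>x. g (f x)) differentiable (at p)"
proof -
  have "((\<lambda>x. g (f x)) has_derivative (\<lambda>h. g (frechet_derivative f (at p) h))) (at p)"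
    using bounded_linear.has_derivative[OF assms(2)] assms(1) frechet_derivative_works by blast
  then show "frechet_derivative (\<lambda>x. g (f x)) (at p) h = g (frechet_derivative f (at p) h)"
    and "(\<lambda>x. g (f x)) differentiable (at p)"
    using frechet_derivative_at differentiableI by metis+
qed

lemma bounded_linear_qc: "bounded_linear qc"
  unfolding qc_def[abs_def] by (rule bounded_linear_fst)

lemma bounded_linear_vc: "bounded_linear vc"
  unfolding vc_def[abs_def] by (intro bounded_linear_compose[OF bounded_linear_fst] bounded_linear_snd)

lemma pt_eq_coordinate_sum:
  fixes w :: "('n::finite,'m::finite) pt"
  shows "w = (\<Sum>i\<in>UNIV. qc w $ i *\<^sub>R (axis i 1, 0, 0)) + (\<Sum>i\<in>UNIV. vc w $ i *\<^sub>R (0, axis i 1, 0))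
      + (\<Sum>k\<in>UNIV. zc w $ k *\<^sub>R (0, 0, axis k 1))"
  by (simp add: prod_eq_iff fst_sum snd_sum qc_def vc_def zc_def
      basis_expansion[where 'a=real, unfolded scalar_mult_eq_scaleR])

lemma frechet_derivative_coordinates:
  fixes L :: "('n::finite,'m::finite) pt \<Rightarrow> real"
  assumes "L differentiable (at p)"
  shows "frechet_derivative L (at p) w = (\<Sum>i\<in>UNIV. qc w $ i * pq L i p)
      + (\<Sum>i\<in>UNIV. vc w $ i * pv L i p) + (\<Sum>k\<in>UNIV. zc w $ k * pz L k p)"
proof -
  have lin: "linear (frechet_derivative L (at p))"
    using assms by (rule linear_frechet_derivative)
  show ?thesis
    unfolding pq_def pv_def pz_def
    by (subst pt_eq_coordinate_sum[of w])
      (simp only: linear_add[OF lin] linear_sum[OF lin] linear_scale[OF lin] real_scaleR_def)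
qed

lemma frechet_derivative_vert:
  fixes L :: "('n::finite,'m::finite) pt \<Rightarrow> real"
  assumes "L differentiable (at p)"
  shows "frechet_derivative L (at p) (vert w) = (\<Sum>i\<in>UNIV. qc w $ i * pv L i p)"
  using frechet_derivative_coordinates[OF assms] by (simp add: vert_def qc_def vc_def zc_def)

lemma frechet_derivative_energy:
  fixes L :: "('n::finite,'m::finite) pt \<Rightarrow> real"
  assumes "L differentiable (at p)" "\<And>j. pv L j differentiable (at p)"
  shows "frechet_derivative (energy L) (at p) w =
     (\<Sum>j\<in>UNIV. vc p $ j * frechet_derivative (pv L j) (at p) w + vc w $ j * pv L j p)
     - frechet_derivative L (at p) w"
proof -
  have "(energy L has_derivative (\<lambda>w. (\<Sum>j\<in>UNIV. vc p $ j * frechet_derivative (pv L j) (at p) w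
          + vc w $ j * pv L j p) - frechet_derivative L (at p) w)) (at p)"
    unfolding energy_def[abs_def]
    using assms bounded_linear_compose[OF bounded_linear_vec_nth bounded_linear_vc]
    by (intro has_derivative_diff has_derivative_sum has_derivative_mult
        bounded_linear_imp_has_derivative) (auto simp: frechet_derivative_works)
  then show ?thesis
    by (simp add: frechet_derivative_at[symmetric])
qed

lemma d1form_lam:
  fixes L :: "('n::finite,'m::finite) pt \<Rightarrow> real"
  assumes "\<And>j. pv L j differentiable (at p)"
  shows "d1form (lam L k) p u w = (\<Sum>j\<in>UNIV. frechet_derivative (pv L j) (at p) w * qc u $ j)
     - (\<Sum>j\<in>UNIV. frechet_derivative (pv L j) (at p) u * qc w $ j)"
proof -
  have "frechet_derivative (\<lambda>x. lam L k x w) (at p)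
      = (\<lambda>u. - (\<Sum>j\<in>UNIV. frechet_derivative (pv L j) (at p) u * qc w $ j))" for w
    unfolding lam_def
    by (rule frechet_derivative_at[symmetric])
      (use assms in \<open>auto intro!: derivative_eq_intros simp: frechet_derivative_works sum_negf\<close>)
  then show ?thesis
    unfolding d1form_def by simp
qed

lemma is_XEL_contact_equation:
  fixes L :: "('n::finite,'m::finite) pt \<Rightarrow> real"
  assumes "is_XEL D L XE" "smooth_on D L" "p \<in> D"
  shows "(\<Sum>j\<in>UNIV. frechet_derivative (pv L j) (at p) w * qc (XE p) $ j)
      - (\<Sum>j\<in>UNIV. frechet_derivative (pv L j) (at p) (XE p) * qc w $ j)
    = (\<Sum>j\<in>UNIV. vc p $ j * frechet_derivative (pv L j) (at p) w + vc w $ j * pv L j p)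
      - frechet_derivative L (at p) w
      - (\<Sum>k\<in>UNIV. vf_apply (reeb L k) (energy L) p * lam L k p w)"
proof -
  have dL: "L differentiable (at p)" and dpv: "\<And>j. pv L j differentiable (at p)"
    using assms(2,3) smooth_on_differentiable smooth_on_pv by blast+
  have "d1form (lam L k) p (XE p) w = frechet_derivative (energy L) (at p) w
      - (\<Sum>k\<in>UNIV. vf_apply (reeb L k) (energy L) p * lam L k p w)" for k
    using assms(1,3) unfolding is_XEL_def by blast
  then show ?thesis
    by (simp add: d1form_lam[OF dpv] frechet_derivative_energy[OF dL dpv])
qed

lemma sum_mult_axis_nth: "(\<Sum>j\<in>UNIV. f j * axis i (1::real) $ j) = f i"
  by (simp add: axis_def if_distrib cong: if_cong)

lemma sum_axis_nth_mult: "(\<Sum>j\<in>UNIV. axis i (1::real) $ j * f j) = f i"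
  using sum_mult_axis_nth[of f i] by (simp add: mult.commute)

lemma is_XEL_second_order:
  fixes L :: "('n::finite,'m::finite) pt \<Rightarrow> real"
  assumes "is_XEL D L XE" "smooth_on D L" "regular D L" "p \<in> D"
  shows "qc (XE p) = vc p"
proof -
  have "(Wmat L p *v qc (XE p)) $ i = (Wmat L p *v vc p) $ i" for i
    using is_XEL_contact_equation[OF assms(1,2,4), of "(0, axis i 1, 0)"]
    by (simp add: Wmat_def matrix_vector_mult_def pv_def[symmetric] lam_def qc_def vc_def zc_def
        sum_mult_axis_nth sum.distrib mult.commute)
  then have "Wmat L p *v qc (XE p) = Wmat L p *v vc p"
    by (simp add: vec_eq_iff)
  moreover have "invertible (Wmat L p)"
    using assms(3,4) unfolding regular_def by blast
  ultimately show ?thesis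
    by (metis invertible_def matrix_vector_mul_assoc matrix_vector_mul_lid)
qed

lemma is_XEL_herglotz:
  fixes L :: "('n::finite,'m::finite) pt \<Rightarrow> real"
  assumes "is_XEL D L XE" "smooth_on D L" "regular D L" "p \<in> D"
  shows "frechet_derivative (pv L i) (at p) (XE p)
    = pq L i p - (\<Sum>k\<in>UNIV. vf_apply (reeb L k) (energy L) p) * pv L i p"
  using is_XEL_contact_equation[OF assms(1,2,4), of "(axis i 1, 0, 0)"]
  by (simp add: is_XEL_second_order[OF assms, unfolded qc_def vc_def] pq_def[symmetric]
      lam_def qc_def vc_def zc_def sum_mult_axis_nth sum_axis_nth_mult sum_distrib_left sum_negf mult.commute)

lemma second_order_frechet_derivative_qc:
  fixes XE :: "('n::finite,'m::finite) pt \<Rightarrow> ('n,'m) pt"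
  assumes "open D" "p \<in> D" "XE differentiable (at p)" "\<And>x. x \<in> D \<Longrightarrow> qc (XE x) = vc x"
  shows "qc (frechet_derivative XE (at p) h) = vc h"
proof -
  note qc_XE = frechet_derivative_bounded_linear_comp[OF assms(3) bounded_linear_qc]
  have "qc (frechet_derivative XE (at p) h) = frechet_derivative (\<lambda>x. qc (XE x)) (at p) h"
    using qc_XE(1) by simp
  also have "\<dots> = frechet_derivative vc (at p) h"
    using frechet_derivative_transform_within_open[OF qc_XE(2) assms(1,2)] assms(4) by simp
  also have "\<dots> = vc h"
    using frechet_derivative_at[OF bounded_linear_imp_has_derivative[OF bounded_linear_vc]] by metis
  finally show ?thesis .
qed

lemma qc_lie_bracket_second_order:
  fixes XE X :: "('n::finite,'m::finite) pt \<Rightarrow> ('n,'m) pt"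
  assumes "open D" "p \<in> D" "XE differentiable (at p)" "\<And>x. x \<in> D \<Longrightarrow> qc (XE x) = vc x"
  shows "qc (lie_bracket XE X p) = qc (frechet_derivative X (at p) (XE p)) - vc (X p)"
  using second_order_frechet_derivative_qc[OF assms]
  by (simp add: lie_bracket_def qc_def)

lemma vf_apply_frechet_derivative_vert:
  fixes L :: "('n::finite,'m::finite) pt \<Rightarrow> real"
  assumes "open D" "p \<in> D" "smooth_on D L" "X differentiable (at p)"
  shows "vf_apply Y (\<lambda>x. frechet_derivative L (at x) (vert (X x))) p
    = (\<Sum>i\<in>UNIV. qc (X p) $ i * frechet_derivative (pv L i) (at p) (Y p)
        + qc (frechet_derivative X (at p) (Y p)) $ i * pv L i p)"
proof -
  define g where "g x = (\<Sum>i\<in>UNIV. qc (X x) $ i * pv L i x)" for x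
  have qc_X: "((\<lambda>x. qc (X x) $ i) has_derivative (\<lambda>h. qc (frechet_derivative X (at p) h) $ i)) (at p)"
    for i
    by (rule bounded_linear.has_derivative[OF bounded_linear_compose[OF bounded_linear_vec_nth
          bounded_linear_qc]])
      (use assms(4) in \<open>simp add: frechet_derivative_works\<close>)
  have "(g has_derivative (\<lambda>h. \<Sum>i\<in>UNIV. qc (X p) $ i * frechet_derivative (pv L i) (at p) h
      + qc (frechet_derivative X (at p) h) $ i * pv L i p)) (at p)"
    unfolding g_def
    using qc_X smooth_on_differentiable[OF smooth_on_pv[OF assms(3)] assms(2)]
    by (intro has_derivative_sum has_derivative_mult) (auto simp: frechet_derivative_works)
  moreover have "frechet_derivative (\<lambda>x. frechet_derivative L (at x) (vert (X x))) (at p)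
      = frechet_derivative g (at p)"
    by (rule frechet_derivative_transform_within_open[OF differentiableI[OF calculation] assms(1,2),
          symmetric])
      (simp add: g_def frechet_derivative_vert[OF smooth_on_differentiable[OF assms(3)]])
  ultimately show ?thesis
    unfolding vf_apply_def by (simp add: frechet_derivative_at[symmetric])
qed

theorem theorem3:
  fixes D :: "('n::finite, 'm::finite) pt set"
    and L :: "('n, 'm) pt \<Rightarrow> real"
    and XE X :: "('n, 'm) pt \<Rightarrow> ('n, 'm) pt"
  assumes "open D"
    and "smooth_on D L"
    and "regular D L"
    and "smooth_vf D XE"
    and "is_XEL D L XE"
    and "smooth_vf D X"
    and "\<forall>p\<in>D. - vf_apply X L p
               - frechet_derivative L (at p) (vert (lie_bracket XE X p))
               + (\<Sum>k\<in>UNIV. pz L k p * zc (X p) $ k) = 0"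
  shows "dissipated D L XE (\<lambda>p. frechet_derivative L (at p) (vert (X p)))"
  unfolding dissipated_def
proof
  fix p assume p: "p \<in> D"
  define \<rho> where "\<rho> = (\<Sum>k\<in>UNIV. vf_apply (reeb L k) (energy L) p)"
  have dL: "L differentiable (at p)"
    using assms(2) p by (rule smooth_on_differentiable)
  have dX: "X differentiable (at p)" and dXE: "XE differentiable (at p)"
    using assms(4,6) p smooth_vf_differentiable by blast+
  have bracket: "frechet_derivative L (at p) (vert (lie_bracket XE X p))
      = (\<Sum>i\<in>UNIV. (qc (frechet_derivative X (at p) (XE p)) $ i - vc (X p) $ i) * pv L i p)"
    by (simp add: frechet_derivative_vert[OF dL] left_diff_distrib
        qc_lie_bracket_second_order[OF assms(1) p dXE is_XEL_second_order[OF assms(5,2,3)]])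
  have "vf_apply XE (\<lambda>x. frechet_derivative L (at x) (vert (X x))) p
      = (\<Sum>i\<in>UNIV. qc (X p) $ i * (pq L i p - \<rho> * pv L i p)
          + qc (frechet_derivative X (at p) (XE p)) $ i * pv L i p)"
    by (simp add: vf_apply_frechet_derivative_vert[OF assms(1) p assms(2) dX]
        is_XEL_herglotz[OF assms(5,2,3) p] \<rho>_def)
  also have "\<dots> = vf_apply X L p + frechet_derivative L (at p) (vert (lie_bracket XE X p))
      - (\<Sum>k\<in>UNIV. pz L k p * zc (X p) $ k) - \<rho> * frechet_derivative L (at p) (vert (X p))"
    unfolding bracket
    by (simp add: vf_apply_def frechet_derivative_coordinates[OF dL, of "X p"]
        frechet_derivative_vert[OF dL] algebra_simps sum.distrib sum_subtractf sum_distrib_left)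
  also have "\<dots> = - frechet_derivative L (at p) (vert (X p)) * \<rho>"
    using bspec[OF assms(7) p] by (simp add: algebra_simps)
  finally show "vf_apply XE (\<lambda>x. frechet_derivative L (at x) (vert (X x))) p
      = - frechet_derivative L (at p) (vert (X p)) * (\<Sum>k\<in>UNIV. vf_apply (reeb L k) (energy L) p)"
    unfolding \<rho>_def .
qed

end
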